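(* Let $G$ be a bipartite graph between $U$ and $V$ with edge weights in $\{-1,+1\}$, and let $d>0$. Suppose every $u\in U$ satisfies $|F(u)|\le 1.2d$ and $|F^+(u)|\ge 0.45d$. Let $S\subseteq U$ have the $11/12$-strong unique neighbour property, let $h=\mathbf 1_S$ and $y=\operatorname{sgn}(Gh)$, i.e. $y_v=\operatorname{sgn}\big(\sum_{u\in S,\,v\in F(u)}w(u,v)\big)$. Define $\hat h\in\{0,1\}^U$ by $\hat h_u=1$ if and only if $|\{v\in F^+(u): y_v=1\}|>0.3d$ (equivalently $\hat h=\operatorname{sgn}(M^{T}y-0.3d\,\mathbf 1)$ where $M$ is the $V\times U$ $0/1$ indicator matrix of the $+1$ edges). Then $\hat h=h$.
   Context: $\operatorname{sgn}(x)=1$ if $x>0$ and $0$ otherwise, coordinatewise. For $u\in U$, $F(u)\subseteq V$ is its set of neighbours and $F^+(u)=\{v\in F(u):w(u,v)=+1\}$; for $T\subseteq U$, $F(T)=\bigcup_{u\in T}F(u)$. For $u\in U$ and $S\subseteq U$, the unique neighbours of $u$ w.r.t. $S$ are $\mathrm{UF}(u,S)=\{v\in F(u): v\notin F(S\setminus\{u\})\}$. A node $u$ has the $(1-\epsilon)$-unique neighbour property w.r.t. $S$ if $\sum_{v\in \mathrm{UF}(u,S)}|w(u,v)|\ge(1-\epsilon)\sum_{v\in F(u)}|w(u,v)|$; the set $S$ has the $(1-\epsilon)$-strong unique neighbour property if every $u\in U$ (whether or not $u\in S$) has the $(1-\epsilon)$-unique neighbour property w.r.t. $S$. *)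

theory Defs
  imports Complex_Main
begin

definition sgn01 :: "real \<Rightarrow> real" where
  "sgn01 x = (if x > 0 then 1 else 0)"

definition nbrs :: "('a \<Rightarrow> 'b \<Rightarrow> bool) \<Rightarrow> 'b set \<Rightarrow> 'a \<Rightarrow> 'b set" where
  "nbrs E V u = {v \<in> V. E u v}"

definition pos_nbrs :: "('a \<Rightarrow> 'b \<Rightarrow> bool) \<Rightarrow> ('a \<Rightarrow> 'b \<Rightarrow> real) \<Rightarrow> 'b set \<Rightarrow> 'a \<Rightarrow> 'b set" where
  "pos_nbrs E w V u = {v \<in> nbrs E V u. w u v = 1}"

definition nbrs_set :: "('a \<Rightarrow> 'b \<Rightarrow> bool) \<Rightarrow> 'b set \<Rightarrow> 'a set \<Rightarrow> 'b set" where
  "nbrs_set E V T = (\<Union>u\<in>T. nbrs E V u)"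

definition unique_nbrs :: "('a \<Rightarrow> 'b \<Rightarrow> bool) \<Rightarrow> 'b set \<Rightarrow> 'a \<Rightarrow> 'a set \<Rightarrow> 'b set" where
  "unique_nbrs E V u S = {v \<in> nbrs E V u. v \<notin> nbrs_set E V (S - {u})}"

definition has_unique_nbr_prop ::
  "('a \<Rightarrow> 'b \<Rightarrow> bool) \<Rightarrow> ('a \<Rightarrow> 'b \<Rightarrow> real) \<Rightarrow> 'b set \<Rightarrow> real \<Rightarrow> 'a \<Rightarrow> 'a set \<Rightarrow> bool" where
  "has_unique_nbr_prop E w V \<epsilon> u S \<longleftrightarrow>
     (\<Sum>v\<in>unique_nbrs E V u S. \<bar>w u v\<bar>) \<ge> (1 - \<epsilon>) * (\<Sum>v\<in>nbrs E V u. \<bar>w u v\<bar>)"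

definition strong_unique_nbr_prop ::
  "('a \<Rightarrow> 'b \<Rightarrow> bool) \<Rightarrow> ('a \<Rightarrow> 'b \<Rightarrow> real) \<Rightarrow> 'a set \<Rightarrow> 'b set \<Rightarrow> real \<Rightarrow> 'a set \<Rightarrow> bool" where
  "strong_unique_nbr_prop E w U V \<epsilon> S \<longleftrightarrow> (\<forall>u\<in>U. has_unique_nbr_prop E w V \<epsilon> u S)"

definition decode_y ::
  "('a \<Rightarrow> 'b \<Rightarrow> bool) \<Rightarrow> ('a \<Rightarrow> 'b \<Rightarrow> real) \<Rightarrow> 'a set \<Rightarrow> 'b \<Rightarrow> real" where
  "decode_y E w S v = sgn01 (\<Sum>u\<in>{u\<in>S. E u v}. w u v)"

definition decode_h ::
  "('a \<Rightarrow> 'b \<Rightarrow> bool) \<Rightarrow> ('a \<Rightarrow> 'b \<Rightarrow> real) \<Rightarrow> 'b set \<Rightarrow> real \<Rightarrow> 'a set \<Rightarrow> 'a \<Rightarrow> real" where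
  "decode_h E w V d S u =
     sgn01 (real (card {v \<in> pos_nbrs E w V u. decode_y E w S v = 1}) - 0.3 * d)"

end

theory Submission
  imports Defs
begin

text \<open>A unique neighbour v of u is adjacent to no member of S other than u, so y_v is
  w(u,v) when u \<in> S and 0 otherwise. Hence for u \<in> S every positive unique neighbour is
  decoded as 1, while for u \<notin> S only non-unique neighbours can be. The strong unique
  neighbour property bounds the non-unique neighbours by 1.2d/12 = 0.1d, which separates
  the two cases around the threshold 0.3d since 0.45d - 0.1d > 0.3d \<ge> 0.1d.\<close>

lemma unique_nbr_adjacent_in_S:
  assumes "v \<in> unique_nbrs E V u S"
  shows "{u' \<in> S. E u' v} = S \<inter> {u}"
  using assms by (auto simp: unique_nbrs_def nbrs_set_def nbrs_def)

lemma decode_y_unique_nbr: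
  assumes "v \<in> unique_nbrs E V u S"
  shows "decode_y E w S v = (if u \<in> S then sgn01 (w u v) else 0)"
  using unique_nbr_adjacent_in_S[OF assms] by (simp add: decode_y_def sgn01_def)

lemma card_non_unique_nbrs_le:
  assumes "finite V"
    and unit: "\<And>v. v \<in> nbrs E V u \<Longrightarrow> \<bar>w u v\<bar> = 1"
    and "has_unique_nbr_prop E w V \<epsilon> u S"
  shows "real (card (nbrs E V u - unique_nbrs E V u S)) \<le> \<epsilon> * real (card (nbrs E V u))"
proof -
  have sub: "unique_nbrs E V u S \<subseteq> nbrs E V u"
    by (auto simp: unique_nbrs_def)
  have fin: "finite (nbrs E V u)"
    using assms(1) by (simp add: nbrs_def)
  have "(\<Sum>v\<in>unique_nbrs E V u S. \<bar>w u v\<bar>) = real (card (unique_nbrs E V u S))"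
    using sub unit by (simp add: subset_iff)
  moreover have "(\<Sum>v\<in>nbrs E V u. \<bar>w u v\<bar>) = real (card (nbrs E V u))"
    using unit by simp
  ultimately have "real (card (unique_nbrs E V u S)) \<ge> (1 - \<epsilon>) * real (card (nbrs E V u))"
    using assms(3) by (simp add: has_unique_nbr_prop_def)
  moreover have "real (card (nbrs E V u - unique_nbrs E V u S))
      = real (card (nbrs E V u)) - real (card (unique_nbrs E V u S))"
    using sub fin by (simp add: card_Diff_subset card_mono finite_subset of_nat_diff)
  ultimately show ?thesis
    by (simp add: algebra_simps)
qed

lemma card_pos_nbrs_le_decoded:
  assumes "finite V" and "u \<in> S"
  shows "card (pos_nbrs E w V u)
    \<le> card {v \<in> pos_nbrs E w V u. decode_y E w S v = 1}
      + card (nbrs E V u - unique_nbrs E V u S)"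
proof -
  let ?P = "pos_nbrs E w V u" and ?N = "nbrs E V u" and ?Q = "unique_nbrs E V u S"
  have fin: "finite ?N"
    using assms(1) by (simp add: nbrs_def)
  have "?P \<inter> ?Q \<subseteq> {v \<in> ?P. decode_y E w S v = 1}"
    using decode_y_unique_nbr[of _ E V u S w] assms(2) by (auto simp: pos_nbrs_def sgn01_def)
  hence "card (?P \<inter> ?Q) \<le> card {v \<in> ?P. decode_y E w S v = 1}"
    using fin by (intro card_mono) (auto simp: pos_nbrs_def)
  moreover have "card ?P \<le> card (?P \<inter> ?Q) + card (?N - ?Q)"
  proof -
    have "card ?P \<le> card ((?P \<inter> ?Q) \<union> (?N - ?Q))"
      using fin by (intro card_mono) (auto simp: pos_nbrs_def)
    also have "\<dots> \<le> card (?P \<inter> ?Q) + card (?N - ?Q)"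
      by (rule card_Un_le)
    finally show ?thesis .
  qed
  ultimately show ?thesis
    by linarith
qed

lemma card_decoded_le_non_unique:
  assumes "finite V" and "u \<notin> S"
  shows "card {v \<in> pos_nbrs E w V u. decode_y E w S v = 1}
    \<le> card (nbrs E V u - unique_nbrs E V u S)"
proof (rule card_mono)
  show "finite (nbrs E V u - unique_nbrs E V u S)"
    using assms(1) by (simp add: nbrs_def)
  show "{v \<in> pos_nbrs E w V u. decode_y E w S v = 1} \<subseteq> nbrs E V u - unique_nbrs E V u S"
    using decode_y_unique_nbr[of _ E V u S w] assms(2) by (fastforce simp: pos_nbrs_def)
qed

theorem mainTheorem4:
  fixes U :: "'a set" and V :: "'b set"
    and E :: "'a \<Rightarrow> 'b \<Rightarrow> bool" and w :: "'a \<Rightarrow> 'b \<Rightarrow> real"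
    and d :: real and S :: "'a set"
  assumes "finite U" and "finite V"
    and "\<And>u v. E u v \<Longrightarrow> u \<in> U \<and> v \<in> V"
    and "\<And>u v. E u v \<Longrightarrow> w u v = 1 \<or> w u v = -1"
    and "d > 0"
    and "\<And>u. u \<in> U \<Longrightarrow> real (card (nbrs E V u)) \<le> 1.2 * d"
    and "\<And>u. u \<in> U \<Longrightarrow> real (card (pos_nbrs E w V u)) \<ge> 0.45 * d"
    and "S \<subseteq> U"
    and "strong_unique_nbr_prop E w U V (1/12) S"
  shows "\<forall>u\<in>U. decode_h E w V d S u = (if u \<in> S then 1 else 0)"
proof
  fix u assume u: "u \<in> U"
  have "\<And>v. v \<in> nbrs E V u \<Longrightarrow> \<bar>w u v\<bar> = 1"
    using assms(4) by (fastforce simp: nbrs_def)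
  moreover have "has_unique_nbr_prop E w V (1/12) u S"
    using assms(9) u by (simp add: strong_unique_nbr_prop_def)
  ultimately have "real (card (nbrs E V u - unique_nbrs E V u S)) \<le> 0.1 * d"
    using card_non_unique_nbrs_le[OF assms(2)] assms(6)[OF u] by fastforce
  then show "decode_h E w V d S u = (if u \<in> S then 1 else 0)"
    using card_pos_nbrs_le_decoded[OF assms(2), of u S E w]
      card_decoded_le_non_unique[OF assms(2), of u S E w] assms(5,7) u
    by (cases "u \<in> S") (fastforce simp: decode_h_def sgn01_def)+
qed

end
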